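(* Let $a,b,c>0$ and consider the cubic polynomial $p_3(\lambda)=\lambda^3-b\lambda^2-(a+c)\lambda+cb$. Then $p_3$ has three distinct real roots $\lambda_0,\lambda_1,\lambda_2$ with the following properties: (1) they are given by $$\lambda_k=2\sqrt{\frac{3(a+c)+b^2}{9}}\cos\Big(\frac{\theta}{3}+\frac{2k\pi}{3}\Big)+\frac b3,\quad k=0,1,2,\qquad \cos\theta=\frac b2\,\frac{2b^2+9(a+c)-27c}{(3(a+c)+b^2)^{3/2}},\ \theta\in[0,\pi];$$ (2) $\lambda_0\in(\max(b,\sqrt c),+\infty)$, $\lambda_1\in(-\infty,-\sqrt c)$, $\lambda_2\in(0,\min(b,\sqrt c))$; (3) $b=\lambda_0+\lambda_1+\lambda_2$, $a+c=-(\lambda_1\lambda_2+\lambda_0\lambda_1+\lambda_0\lambda_2)$, $cb=-\lambda_0\lambda_1\lambda_2$; (4) $c-\lambda_0^2<0$, $c-\lambda_1^2<0$, $c-\lambda_2^2>0$, and $\lambda_2<|\lambda_1|<\lambda_0$. *)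

theory Defs
  imports Complex_Main "HOL-Computational_Algebra.Polynomial"
begin

definition p3 :: "real \<Rightarrow> real \<Rightarrow> real \<Rightarrow> real poly" where
  "p3 a b c = [: c * b, -(a + c), -b, 1 :]"

end

theory Submission
  imports Defs
begin

text \<open>Shifting by b/3 turns p3 into the depressed cubic y^3 - (P/3) y - b K / 27, where
  P = 3(a+c) + b^2 > 0 and K = 2b^2 + 9(a+c) - 27c. Viete's substitution
  y = 2 sqrt(P/9) cos phi together with cos(3 phi) = 4 cos^3 phi - 3 cos phi reduces the
  equation to cos(3 phi) = b K / (2 P^(3/2)), whose right-hand side lies strictly between -1
  and 1 because 4 P^3 - (b K)^2 is 27 times a polynomial in a, b, c with positive
  coefficients plus 4 c (c - b^2)^2. This gives three distinct real roots, hence the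
  factorisation of p3 and Vieta's formulas. The roots are then located from the signs of p3 at
  0, b, sqrt c and -sqrt c (namely c b > 0, -a b < 0, -a sqrt c < 0, a sqrt c > 0) and from
  l0 + l1 + l2 = b > 0.\<close>

lemma monic_cubic_vieta:
  fixes l0 l1 l2 p q r :: "'a::idom"
  assumes "distinct [l0, l1, l2]"
    and "\<And>l. l \<in> {l0, l1, l2} \<Longrightarrow> l^3 + p*l^2 + q*l + r = 0"
  shows "p = - (l0 + l1 + l2)" and "q = l0*l1 + l0*l2 + l1*l2" and "r = - (l0*l1*l2)"
proof -
  have r0: "l0^3 + p*l0^2 + q*l0 + r = 0" and r1: "l1^3 + p*l1^2 + q*l1 + r = 0"
    and r2: "l2^3 + p*l2^2 + q*l2 + r = 0" using assms(2) by auto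
  have "(l0 - l1) * (l0^2 + l0*l1 + l1^2 + p*(l0 + l1) + q) = 0"
    using r0 r1 by algebra
  then have h01: "l0^2 + l0*l1 + l1^2 + p*(l0 + l1) + q = 0" using assms(1) by simp
  have "(l0 - l2) * (l0^2 + l0*l2 + l2^2 + p*(l0 + l2) + q) = 0"
    using r0 r2 by algebra
  then have h02: "l0^2 + l0*l2 + l2^2 + p*(l0 + l2) + q = 0" using assms(1) by simp
  have "(l1 - l2) * (l0 + l1 + l2 + p) = 0" using h01 h02 by algebra
  then have "l0 + l1 + l2 + p = 0" using assms(1) by simp
  then show p: "p = - (l0 + l1 + l2)" by algebra
  show q: "q = l0*l1 + l0*l2 + l1*l2" using h01 p by algebra
  show "r = - (l0*l1*l2)" using r0 p q by algebra
qed

lemma monic_cubic_eq_prod: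
  fixes l0 l1 l2 p q r :: "'a::idom"
  assumes "distinct [l0, l1, l2]"
    and "\<And>l. l \<in> {l0, l1, l2} \<Longrightarrow> l^3 + p*l^2 + q*l + r = 0"
  shows "x^3 + p*x^2 + q*x + r = (x - l0) * (x - l1) * (x - l2)"
  using monic_cubic_vieta[OF assms] by algebra

lemma cubic_neg_iff:
  fixes x l0 l1 l2 :: real
  assumes "l1 < l2" "l2 < l0"
  shows "(x - l0) * (x - l1) * (x - l2) < 0 \<longleftrightarrow> x < l1 \<or> (l2 < x \<and> x < l0)"
  using assms by (auto simp: mult_less_0_iff zero_less_mult_iff)

lemma cubic_pos_iff:
  fixes x l0 l1 l2 :: real
  assumes "l1 < l2" "l2 < l0"
  shows "0 < (x - l0) * (x - l1) * (x - l2) \<longleftrightarrow> (l1 < x \<and> x < l2) \<or> l0 < x"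
  using assms by (auto simp: mult_less_0_iff zero_less_mult_iff)

lemma sqrt_less_abs_iff: "sqrt c < \<bar>x\<bar> \<longleftrightarrow> c < x^2"
  using real_sqrt_less_iff[of c "x^2"] by simp

lemma abs_less_sqrt_iff: "\<bar>x\<bar> < sqrt c \<longleftrightarrow> x^2 < c"
  using real_sqrt_less_iff[of "x^2" c] by simp

lemma cos_third_angles_order:
  assumes "0 < \<theta>" "\<theta> < pi"
  shows "cos (\<theta>/3 + 2*pi/3) < -1/2" and "-1/2 < cos (\<theta>/3 + 4*pi/3)"
    and "cos (\<theta>/3 + 4*pi/3) < 1/2" and "1/2 < cos (\<theta>/3)"
proof -
  show "cos (\<theta>/3 + 2*pi/3) < -1/2"
    using cos_monotone_0_pi[of "2*pi/3" "\<theta>/3 + 2*pi/3"] assms by (simp add: cos_120)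
  show "1/2 < cos (\<theta>/3)"
    using cos_monotone_0_pi[of "\<theta>/3" "pi/3"] assms by (simp add: cos_60)
  have "cos (\<theta>/3 + 4*pi/3) = cos (2*pi/3 - \<theta>/3)"
    using cos_2pi_minus[of "2*pi/3 - \<theta>/3"] by (simp add: algebra_simps)
  moreover have "cos (2*pi/3) < cos (2*pi/3 - \<theta>/3)" "cos (2*pi/3 - \<theta>/3) < cos (pi/3)"
    using assms by (auto intro!: cos_monotone_0_pi)
  ultimately show "-1/2 < cos (\<theta>/3 + 4*pi/3)" "cos (\<theta>/3 + 4*pi/3) < 1/2"
    by (simp_all add: cos_60 cos_120)
qed

lemma poly_p3: "poly (p3 a b c) x = x^3 + (- b) * x^2 + (- (a + c)) * x + c * b"
  by (simp add: p3_def algebra_simps power2_eq_square power3_eq_cube)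

lemma poly_p3_trig:
  fixes a b c \<phi> :: real
  assumes "0 \<le> 3 * (a + c) + b^2"
  shows "poly (p3 a b c) (2 * sqrt ((3 * (a + c) + b^2) / 9) * cos \<phi> + b / 3) =
    (2 * (3 * (a + c) + b^2) powr (3/2) * cos (3 * \<phi>) - b * (2 * b^2 + 9 * (a + c) - 27 * c)) / 27"
proof -
  define P where "P = 3 * (a + c) + b^2"
  define r where "r = sqrt (P / 9)"
  have "r^2 = P / 9" using assms by (simp add: r_def P_def)
  then have ac: "a + c = 3 * r^2 - b^2 / 3" by (simp add: P_def)
  have r3: "27 * r^3 = P powr (3/2)"
  proof -
    have "P \<ge> 0" using assms by (simp add: P_def)
    then have "P powr (3/2) = P * sqrt P"
      using powr_mult_base[of P "1/2"] by (simp add: powr_half_sqrt)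
    with \<open>P \<ge> 0\<close> show ?thesis by (simp add: r_def real_sqrt_divide power3_eq_cube)
  qed
  have "poly (p3 a b c) (2 * r * cos \<phi> + b / 3)
      = 2 * r^3 * (4 * cos \<phi> ^ 3 - 3 * cos \<phi>) - b * (2 * b^2 + 9 * (a + c) - 27 * c) / 27"
    unfolding poly_p3 ac by (simp add: field_simps power2_eq_square power3_eq_cube)
  then show ?thesis
    unfolding P_def[symmetric] r_def[symmetric] r3[symmetric] cos_treble_cos by (simp add: field_simps)
qed

lemma poly_p3_trig_root:
  fixes a b c \<phi> :: real
  assumes "0 < 3 * (a + c) + b^2"
    and "cos (3 * \<phi>) = (b / 2) * (2 * b^2 + 9 * (a + c) - 27 * c) / ((3 * (a + c) + b^2) powr (3/2))"
  shows "poly (p3 a b c) (2 * sqrt ((3 * (a + c) + b^2) / 9) * cos \<phi> + b / 3) = 0"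
  unfolding poly_p3_trig[OF less_imp_le[OF assms(1)]] assms(2) using assms(1) by simp

lemma p3_trig_cos_bound:
  fixes a b c :: real
  assumes "0 < a" "0 < b" "0 < c"
  shows "\<bar>(b / 2) * (2 * b^2 + 9 * (a + c) - 27 * c) / ((3 * (a + c) + b^2) powr (3/2))\<bar> < 1"
proof -
  define P where "P = 3 * (a + c) + b^2"
  define K where "K = 2 * b^2 + 9 * (a + c) - 27 * c"
  have "P > 0" using assms by (simp add: P_def add_pos_nonneg)
  have "4 * P^3 - (b * K)^2 =
      27 * (4*a^3 + 4*c*(c - b^2)^2 + b^2*a^2 + 12*a^2*c + 12*a*c^2 + 20*a*b^2*c)"
    unfolding P_def K_def by algebra
  also have "\<dots> > 0" using assms by (intro mult_pos_pos add_pos_nonneg) simp_all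
  also have "4 * P^3 = (2 * P powr (3/2))^2"
    using powr_power[of P "3/2" 2] \<open>P > 0\<close> by (simp add: power_mult_distrib)
  finally have "(b * K)^2 < (2 * P powr (3/2))^2" by simp
  then have "\<bar>b * K\<bar> < 2 * P powr (3/2)" using power2_less_imp_less[of "\<bar>b * K\<bar>"] by simp
  with \<open>P > 0\<close> show ?thesis
    unfolding P_def[symmetric] K_def[symmetric] by (simp add: abs_mult field_simps)
qed

lemma p3_trig_roots:
  fixes a b c \<theta> :: real
  assumes abc: "0 < a" "0 < b" "0 < c" and "0 \<le> \<theta>" "\<theta> \<le> pi"
    and cos_\<theta>: "cos \<theta> = (b / 2) * (2 * b^2 + 9 * (a + c) - 27 * c) / ((3 * (a + c) + b^2) powr (3/2))"
  defines "l k \<equiv> 2 * sqrt ((3 * (a + c) + b^2) / 9) * cos (\<theta> / 3 + 2 * real k * pi / 3) + b / 3"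
  shows "poly (p3 a b c) (l k) = 0" and "l 1 < l 2" and "l 2 < l 0"
proof -
  have "\<bar>cos \<theta>\<bar> < 1" unfolding cos_\<theta> by (rule p3_trig_cos_bound[OF abc])
  with \<open>0 \<le> \<theta>\<close> \<open>\<theta> \<le> pi\<close> have "0 < \<theta>" "\<theta> < pi"
    by (auto simp: order_le_less)
  have "3 * (\<theta> / 3 + 2 * real k * pi / 3) = \<theta> + 2 * real k * pi" by simp
  then have "cos (3 * (\<theta> / 3 + 2 * real k * pi / 3)) = cos \<theta>"
    by (simp only: cos_add cos_2npi sin_2npi)
  with cos_\<theta> abc show "poly (p3 a b c) (l k) = 0"
    unfolding l_def by (intro poly_p3_trig_root) (simp_all add: add_pos_nonneg)
  show "l 1 < l 2" "l 2 < l 0"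
    using cos_third_angles_order[OF \<open>0 < \<theta>\<close> \<open>\<theta> < pi\<close>] abc
    by (simp_all add: l_def add_pos_nonneg)
qed

lemma p3_vieta:
  fixes a b c l0 l1 l2 :: real
  assumes "distinct [l0, l1, l2]"
    and "poly (p3 a b c) l0 = 0" "poly (p3 a b c) l1 = 0" "poly (p3 a b c) l2 = 0"
  shows "poly (p3 a b c) x = (x - l0) * (x - l1) * (x - l2)"
    and "b = l0 + l1 + l2" and "a + c = - (l1 * l2 + l0 * l1 + l0 * l2)" and "c * b = - (l0 * l1 * l2)"
proof -
  have roots: "\<And>l. l \<in> {l0, l1, l2} \<Longrightarrow> l^3 + (- b) * l^2 + (- (a + c)) * l + c * b = 0"
    using assms(2-4) unfolding poly_p3 by auto
  show "poly (p3 a b c) x = (x - l0) * (x - l1) * (x - l2)"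
    unfolding poly_p3 by (rule monic_cubic_eq_prod[OF assms(1) roots])
  show "b = l0 + l1 + l2" "a + c = - (l1 * l2 + l0 * l1 + l0 * l2)" "c * b = - (l0 * l1 * l2)"
    using monic_cubic_vieta[OF assms(1) roots] by simp_all
qed

lemma p3_root_bounds:
  fixes a b c l0 l1 l2 :: real
  assumes abc: "0 < a" "0 < b" "0 < c" and "l1 < l2" "l2 < l0"
    and factor: "\<And>x. poly (p3 a b c) x = (x - l0) * (x - l1) * (x - l2)"
    and sum: "b = l0 + l1 + l2"
  shows "max b (sqrt c) < l0" "l1 < - sqrt c" "0 < l2" "l2 < min b (sqrt c)"
    "c - l0^2 < 0" "c - l1^2 < 0" "c - l2^2 > 0" "l2 < \<bar>l1\<bar>" "\<bar>l1\<bar> < l0"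
proof -
  note below_zero = cubic_neg_iff[OF \<open>l1 < l2\<close> \<open>l2 < l0\<close>, folded factor]
  note above_zero = cubic_pos_iff[OF \<open>l1 < l2\<close> \<open>l2 < l0\<close>, folded factor]
  have "sqrt c > 0" using abc by simp
  have "l1 < 0 \<and> 0 < l2 \<or> l0 < 0"
    using above_zero[of 0] abc by (simp add: poly_p3)
  with sum abc \<open>l1 < l2\<close> \<open>l2 < l0\<close> have "l1 < 0" "0 < l2" by linarith+
  have "sqrt c < l1 \<or> l2 < sqrt c \<and> sqrt c < l0"
    using below_zero[of "sqrt c"] abc by (simp add: poly_p3 power2_eq_square power3_eq_cube algebra_simps)
  with \<open>l1 < 0\<close> \<open>sqrt c > 0\<close> have "l2 < sqrt c" "sqrt c < l0" by linarith+
  have "l1 < - sqrt c \<and> - sqrt c < l2 \<or> l0 < - sqrt c"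
    using above_zero[of "- sqrt c"] abc by (simp add: poly_p3 power2_eq_square power3_eq_cube algebra_simps)
  with \<open>0 < l2\<close> \<open>l2 < l0\<close> \<open>sqrt c > 0\<close> show "l1 < - sqrt c" by linarith
  have "b < l1 \<or> l2 < b \<and> b < l0"
    using below_zero[of b] abc by (simp add: poly_p3 power2_eq_square power3_eq_cube algebra_simps)
  with \<open>l1 < 0\<close> abc have "l2 < b" "b < l0" by linarith+
  show "max b (sqrt c) < l0" "0 < l2" "l2 < min b (sqrt c)"
    using \<open>l2 < b\<close> \<open>b < l0\<close> \<open>l2 < sqrt c\<close> \<open>sqrt c < l0\<close> \<open>0 < l2\<close> by auto
  show "c - l0^2 < 0" "c - l1^2 < 0" "c - l2^2 > 0"
    using sqrt_less_abs_iff[of c l0] sqrt_less_abs_iff[of c l1] abs_less_sqrt_iff[of l2 c]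
      \<open>sqrt c < l0\<close> \<open>l1 < - sqrt c\<close> \<open>l2 < sqrt c\<close> \<open>0 < l2\<close> by auto
  show "l2 < \<bar>l1\<bar>" "\<bar>l1\<bar> < l0"
    using sum \<open>l1 < 0\<close> \<open>l2 < b\<close> \<open>b < l0\<close> by auto
qed

theorem proposition1:
  fixes a b c :: real
  assumes "a > 0" and "b > 0" and "c > 0"
  shows "\<exists>l0 l1 l2 :: real.
     distinct [l0, l1, l2] \<and>
     {x. poly (p3 a b c) x = 0} = {l0, l1, l2} \<and>
     (\<exists>\<theta>. 0 \<le> \<theta> \<and> \<theta> \<le> pi \<and>
        cos \<theta> = (b / 2) * (2 * b^2 + 9 * (a + c) - 27 * c) / ((3 * (a + c) + b^2) powr (3/2)) \<and>
        (\<forall>k::nat. k \<le> 2 \<longrightarrow>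
           [l0, l1, l2] ! k =
             2 * sqrt ((3 * (a + c) + b^2) / 9) * cos (\<theta> / 3 + 2 * real k * pi / 3) + b / 3)) \<and>
     max b (sqrt c) < l0 \<and>
     l1 < - sqrt c \<and>
     0 < l2 \<and> l2 < min b (sqrt c) \<and>
     b = l0 + l1 + l2 \<and>
     a + c = - (l1 * l2 + l0 * l1 + l0 * l2) \<and>
     c * b = - (l0 * l1 * l2) \<and>
     c - l0^2 < 0 \<and> c - l1^2 < 0 \<and> c - l2^2 > 0 \<and>
     l2 < \<bar>l1\<bar> \<and> \<bar>l1\<bar> < l0"
proof -
  define C where
    "C = (b / 2) * (2 * b^2 + 9 * (a + c) - 27 * c) / ((3 * (a + c) + b^2) powr (3/2))"
  define \<theta> where "\<theta> = arccos C"
  have "\<bar>C\<bar> < 1" unfolding C_def by (rule p3_trig_cos_bound[OF assms])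
  then have \<theta>: "0 \<le> \<theta>" "\<theta> \<le> pi" "cos \<theta> = C"
    by (simp_all add: \<theta>_def abs_less_iff arccos_lbound arccos_ubound)
  define l where
    "l k = 2 * sqrt ((3 * (a + c) + b^2) / 9) * cos (\<theta> / 3 + 2 * real k * pi / 3) + b / 3"
    for k :: nat
  note roots = p3_trig_roots[OF assms \<theta>[unfolded C_def], folded l_def]
  then have distinct: "distinct [l 0, l 1, l 2]" by auto
  note vieta = p3_vieta[OF distinct roots(1) roots(1) roots(1)]
  have root_set: "{x. poly (p3 a b c) x = 0} = {l 0, l 1, l 2}" unfolding vieta(1) by auto
  have trig: "\<exists>\<theta>. 0 \<le> \<theta> \<and> \<theta> \<le> pi \<and>
      cos \<theta> = (b / 2) * (2 * b^2 + 9 * (a + c) - 27 * c) / ((3 * (a + c) + b^2) powr (3/2)) \<and>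
      (\<forall>k::nat. k \<le> 2 \<longrightarrow> [l 0, l 1, l 2] ! k =
         2 * sqrt ((3 * (a + c) + b^2) / 9) * cos (\<theta> / 3 + 2 * real k * pi / 3) + b / 3)"
    using \<theta> unfolding C_def l_def by (intro exI[of _ \<theta>]) (auto simp: le_Suc_eq numeral_2_eq_2)
  note bounds = p3_root_bounds[OF assms roots(2,3) vieta(1,2)]
  show ?thesis
    by (rule exI[of _ "l 0"], rule exI[of _ "l 1"], rule exI[of _ "l 2"], intro conjI)
      (fact distinct root_set trig bounds vieta(2-4))+
qed

end
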